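(* For integers $0\le k\le n$, the Bernoulli numbers satisfy \[ \sum_{j=0}^{n-k}\binom{n-k}{j}B_{j+k}=\begin{cases} \sum_{j=0}^{k}\binom{k}{j}(-1)^{j}B_{n-j} & \text{if } 0\le k\le n-2,\ n\ge2,\\[2pt] \sum_{j=0}^{k}\binom{k}{j}(-1)^{j}B_{n-j}+(-1)^{n-1} & \text{if } k=n-1,\ n\ge1,\\[2pt] \sum_{j=0}^{k}\binom{k}{j}(-1)^{j}B_{n-j}+n(-1)^{n-1} & \text{if } k=n,\ n\ge0. \end{cases} \]
   Context: The Bernoulli numbers $B_n$ are defined by $\sum_{n\ge0}B_n\frac{t^n}{n!}=\frac{t}{e^t-1}$ (so $B_1=-\frac12$). *)

theory Defs
  imports "HOL-Computational_Algebra.Formal_Power_Series"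
begin

text \<open>Bernoulli numbers via the exponential generating function
  sum B_n t^n/n! = t/(e^t - 1) (so B_1 = -1/2), as formal power series over the reals.\<close>
definition bernoulli_num :: "nat \<Rightarrow> real" where
  "bernoulli_num n = fact n * fps_nth (fps_X / (fps_exp 1 - 1)) n"

end

theory Submission
  imports Defs
begin

(* For m, k \<ge> 0 consider the defect
     D m k = \<Sum>_{j\<le>m} C(m,j) B_{j+k}  -  \<Sum>_{j\<le>k} C(k,j) (-1)^j B_{m+k-j},
   so that the theorem says D (n-k) k = 0, (-1)^(n-1), n(-1)^(n-1) according as
   n-k \<ge> 2, n-k = 1, n-k = 0.
   (1) Both sums obey Pascal's rule, which gives D (m+1) k = D m k + D m (k+1).
   (2) The generating function B(t) = t/(e^t-1) satisfies e^{-t} B(t) = B(t) - t e^{-t};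
       comparing coefficients yields the reflection identity
       \<Sum>_{j\<le>k} C(k,j) (-1)^j B_{k-j} = B_k + k (-1)^k, i.e. D 0 k = -k (-1)^k.
   From (1) and (2): D 1 k = (-1)^k and D 2 k = 0, hence D m k = 0 for all m \<ge> 2.
   The file first establishes the generating function facts, then the coefficient
   identity, then the recursion for the defect, and finally reads off the theorem. *)

unbundle fps_syntax

definition bernoulli_fps :: "real fps" where
  "bernoulli_fps = fps_X / (fps_exp 1 - 1)"

lemma bernoulli_fps_nth: "bernoulli_fps $ n = bernoulli_num n / fact n"
  unfolding bernoulli_num_def bernoulli_fps_def by simp

text \<open>The defining relation B(t) (e^t - 1) = t; the division is exact because
  e^t - 1 has subdegree 1.\<close>
lemma bernoulli_fps_times_exp_minus_one: "bernoulli_fps * (fps_exp 1 - 1) = fps_X"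
proof -
  have nonzero: "(fps_exp 1 - 1 :: real fps) \<noteq> 0"
  proof
    assume "(fps_exp 1 - 1 :: real fps) = 0"
    then have "(fps_exp 1 - 1 :: real fps) $ 1 = 0" by simp
    then show False by simp
  qed
  have "subdegree (fps_exp 1 - 1 :: real fps) \<le> subdegree (fps_X :: real fps)"
    using subdegree_leI[of "fps_exp 1 - 1 :: real fps" 1] by simp
  then show ?thesis
    unfolding bernoulli_fps_def using fps_times_divide_eq[OF nonzero] by blast
qed

text \<open>Reflection: e^{-t} B(t) = B(t) - t e^{-t}, equivalently B(-t) = B(t) + t.\<close>
lemma bernoulli_fps_reflection:
  "fps_exp (-1) * bernoulli_fps = bernoulli_fps - fps_X * fps_exp (-1)"
proof -
  have inverse: "fps_exp (-1) * fps_exp 1 = (1 :: real fps)"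
    using fps_exp_add_mult[of "-1::real" 1] by simp
  have "fps_exp (-1) * bernoulli_fps - bernoulli_fps
      = - ((bernoulli_fps * (fps_exp 1 - 1)) * fps_exp (-1))"
    using inverse by (simp add: algebra_simps)
  also have "\<dots> = - (fps_X * fps_exp (-1))"
    by (simp add: bernoulli_fps_times_exp_minus_one)
  finally show ?thesis by (simp add: algebra_simps)
qed

lemma fact_times_exp_mult_nth:
  fixes c :: "'a :: field_char_0" and F :: "'a fps"
  shows "fact k * (fps_exp c * F) $ k
       = (\<Sum>j\<le>k. of_nat (k choose j) * c ^ j * (fact (k - j) * F $ (k - j)))"
  unfolding fps_mult_nth sum_distrib_left atLeast0AtMost
  by (rule sum.cong) (auto simp: binomial_fact field_simps)

lemma fact_times_X_mult_exp_nth: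
  fixes c :: "'a :: field_char_0"
  shows "fact k * (fps_X * fps_exp c) $ k = of_nat k * c ^ (k - 1)"
proof (cases k)
  case (Suc m)
  then show ?thesis by (simp add: fact_Suc)
qed simp

lemma bernoulli_reflection_sum:
  "(\<Sum>j\<le>k. real (k choose j) * (-1) ^ j * bernoulli_num (k - j))
     = bernoulli_num k + real k * (-1) ^ k"
proof -
  have "(\<Sum>j\<le>k. real (k choose j) * (-1) ^ j * bernoulli_num (k - j))
      = fact k * (fps_exp (-1) * bernoulli_fps) $ k"
    by (simp add: fact_times_exp_mult_nth bernoulli_fps_nth)
  also have "\<dots> = fact k * bernoulli_fps $ k - fact k * (fps_X * fps_exp (-1)) $ k"
    by (simp add: bernoulli_fps_reflection right_diff_distrib)
  also have "\<dots> = bernoulli_num k - real k * (-1) ^ (k - 1)"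
    using fact_times_X_mult_exp_nth[of k "-1::real"] by (simp add: bernoulli_fps_nth)
  also have "\<dots> = bernoulli_num k + real k * (-1) ^ k"
    by (cases k) simp_all
  finally show ?thesis .
qed

lemma binomial_sum_Suc:
  fixes g :: "nat \<Rightarrow> 'a :: comm_semiring_1"
  shows "(\<Sum>j\<le>Suc m. of_nat (Suc m choose j) * g j)
       = (\<Sum>j\<le>m. of_nat (m choose j) * g j) + (\<Sum>j\<le>m. of_nat (m choose j) * g (Suc j))"
proof -
  have "(\<Sum>j\<le>Suc m. of_nat (Suc m choose j) * g j)
      = g 0 + (\<Sum>j\<le>m. of_nat (m choose Suc j) * g (Suc j))
            + (\<Sum>j\<le>m. of_nat (m choose j) * g (Suc j))"
    by (subst sum.atMost_Suc_shift) (simp add: sum.distrib algebra_simps)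
  also have "g 0 + (\<Sum>j\<le>m. of_nat (m choose Suc j) * g (Suc j))
      = (\<Sum>j\<le>m. of_nat (m choose j) * g j)"
  proof -
    have "(\<Sum>j\<le>m. of_nat (m choose j) * g j) = (\<Sum>j\<le>Suc m. of_nat (m choose j) * g j)"
      by (simp add: binomial_eq_0)
    also have "\<dots> = g 0 + (\<Sum>j\<le>m. of_nat (m choose Suc j) * g (Suc j))"
      by (subst sum.atMost_Suc_shift) simp
    finally show ?thesis by simp
  qed
  finally show ?thesis .
qed

definition forward_sum :: "nat \<Rightarrow> nat \<Rightarrow> real" where
  "forward_sum m k = (\<Sum>j\<le>m. real (m choose j) * bernoulli_num (j + k))"

definition alternating_sum :: "nat \<Rightarrow> nat \<Rightarrow> real" where
  "alternating_sum m k = (\<Sum>j\<le>k. real (k choose j) * (-1) ^ j * bernoulli_num (m + k - j))"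

definition defect :: "nat \<Rightarrow> nat \<Rightarrow> real" where
  "defect m k = forward_sum m k - alternating_sum m k"

lemma forward_sum_Suc: "forward_sum (Suc m) k = forward_sum m k + forward_sum m (Suc k)"
  unfolding forward_sum_def by (subst binomial_sum_Suc) simp

lemma alternating_sum_Suc:
  "alternating_sum m (Suc k) = alternating_sum (Suc m) k - alternating_sum m k"
proof -
  let ?g = "\<lambda>j. (-1) ^ j * bernoulli_num (m + Suc k - j)"
  have "alternating_sum m (Suc k) = (\<Sum>j\<le>Suc k. real (Suc k choose j) * ?g j)"
    unfolding alternating_sum_def by (simp add: mult.assoc)
  also have "\<dots> = (\<Sum>j\<le>k. real (k choose j) * ?g j) + (\<Sum>j\<le>k. real (k choose j) * ?g (Suc j))"
    by (rule binomial_sum_Suc)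
  also have "(\<Sum>j\<le>k. real (k choose j) * ?g j) = alternating_sum (Suc m) k"
    unfolding alternating_sum_def by (simp add: mult.assoc)
  also have "(\<Sum>j\<le>k. real (k choose j) * ?g (Suc j)) = - alternating_sum m k"
    unfolding alternating_sum_def by (simp add: sum_negf[symmetric] mult.assoc)
  finally show ?thesis by simp
qed

lemma defect_Suc: "defect (Suc m) k = defect m k + defect m (Suc k)"
  unfolding defect_def using forward_sum_Suc[of m k] alternating_sum_Suc[of m k] by simp

lemma defect_0: "defect 0 k = - real k * (-1) ^ k"
  unfolding defect_def forward_sum_def alternating_sum_def
  using bernoulli_reflection_sum[of k] by simp

lemma defect_1: "defect 1 k = (-1) ^ k"
  using defect_Suc[of 0 k] defect_0[of k] defect_0[of "Suc k"] by (simp add: algebra_simps)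

lemma defect_vanishes: "defect (Suc (Suc m)) k = 0"
proof (induction m arbitrary: k)
  case 0
  show ?case using defect_Suc[of 1 k] defect_1[of k] defect_1[of "Suc k"] by simp
next
  case (Suc m)
  show ?case using defect_Suc[of "Suc (Suc m)" k] Suc.IH by simp
qed

lemma sum_eq_alternating_plus_defect:
  assumes "k \<le> n"
  shows "(\<Sum>j=0..n-k. real ((n-k) choose j) * bernoulli_num (j+k))
       = (\<Sum>j=0..k. real (k choose j) * (-1)^j * bernoulli_num (n-j)) + defect (n - k) k"
  using assms unfolding defect_def forward_sum_def alternating_sum_def atLeast0AtMost by simp

theorem mainTheorem3:
  fixes n k :: nat
  assumes "k \<le> n"
  shows "(k \<le> n - 2 \<and> n \<ge> 2 \<longrightarrow>
           (\<Sum>j=0..n-k. real ((n-k) choose j) * bernoulli_num (j+k))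
             = (\<Sum>j=0..k. real (k choose j) * (-1)^j * bernoulli_num (n-j)))
       \<and> (k = n - 1 \<and> n \<ge> 1 \<longrightarrow>
           (\<Sum>j=0..n-k. real ((n-k) choose j) * bernoulli_num (j+k))
             = (\<Sum>j=0..k. real (k choose j) * (-1)^j * bernoulli_num (n-j)) + (-1)^(n-1))
       \<and> (k = n \<longrightarrow>
           (\<Sum>j=0..n-k. real ((n-k) choose j) * bernoulli_num (j+k))
             = (\<Sum>j=0..k. real (k choose j) * (-1)^j * bernoulli_num (n-j)) + real n * (-1)^(n-1))"
proof (intro conjI impI)
  assume "k \<le> n - 2 \<and> n \<ge> 2"
  then have "n - k = Suc (Suc (n - k - 2))" by linarith
  then show "(\<Sum>j=0..n-k. real ((n-k) choose j) * bernoulli_num (j+k))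
             = (\<Sum>j=0..k. real (k choose j) * (-1)^j * bernoulli_num (n-j))"
    using sum_eq_alternating_plus_defect[OF assms] defect_vanishes by simp
next
  assume "k = n - 1 \<and> n \<ge> 1"
  then have "n - k = 1" "n - 1 = k" by simp_all
  then show "(\<Sum>j=0..n-k. real ((n-k) choose j) * bernoulli_num (j+k))
             = (\<Sum>j=0..k. real (k choose j) * (-1)^j * bernoulli_num (n-j)) + (-1)^(n-1)"
    using sum_eq_alternating_plus_defect[OF assms] defect_1 by simp
next
  assume "k = n"
  moreover have "defect 0 n = real n * (-1)^(n-1)"
    by (cases n) (simp_all add: defect_0 algebra_simps)
  ultimately show "(\<Sum>j=0..n-k. real ((n-k) choose j) * bernoulli_num (j+k))
             = (\<Sum>j=0..k. real (k choose j) * (-1)^j * bernoulli_num (n-j)) + real n * (-1)^(n-1)"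
    using sum_eq_alternating_plus_defect[OF assms] by simp
qed

end
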